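(* In the full-observability model (see context), fix $m$, $\lambda,\gamma>0$, the $p_I(k,\mathcal{T})$, $u\ge m\max\{\lambda,\gamma\}$, assume $\mathbf{P}^{0}$ irreducible with stationary distribution $\boldsymbol{\pi}^{0}$, and let $\tau_\eta\in\mathbb{R}$. Fix $\hat{\mathbf{p}}=(\hat p_R,\hat p_J)\in(0,1]^2$ at which $\mathbf{P}^{1}(\hat{\mathbf{p}})$ is irreducible, let $\boldsymbol{\pi}^{1}(\mathbf{p})$ denote the (row-vector) stationary distribution of $\mathbf{P}^{1}(\mathbf{p})$ and $\mathbf{J}(\hat{\mathbf{p}})\in\mathbb{R}^{2\times 2^m}$ its Jacobian with respect to $\mathbf{p}=(p_R,p_J)$ at $\hat{\mathbf{p}}$, and define the first-order approximation $\boldsymbol{\pi}^{1}_{\rm ts}(\mathbf{p})=\boldsymbol{\pi}^{1}(\hat{\mathbf{p}})+(\mathbf{p}-\hat{\mathbf{p}})\mathbf{J}(\hat{\mathbf{p}})$. Let $\mathbf{t}\in\{0,1\}^{2^m}$ be the indicator vector of the collision states $\mathcal{S}_3=\{\mathcal{T}\in\mathcal{S}:1\in\mathcal{T},|\mathcal{T}|>1\}$. Then the optimization problem $$\min_{\mathbf{p}\in[0,1]^2} I(p_R,p_J)\quad\text{subject to}\quad \boldsymbol{\pi}^{1}_{\rm ts}(\mathbf{p})\,\mathbf{t}\ge\tau_\eta\,\boldsymbol{\pi}^{0}\mathbf{t}$$ is a convex optimization problem (convex objective over a convex feasible set).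
   Context: Full-observability model: $m$ stations indexed by $[m]$; station 1 is the station under test. State space $\mathcal{S}$ = all subsets $\mathcal{T}\subseteq[m]$. Given $p_I(k,\mathcal{T})\in[0,1]$ for $k\notin\mathcal{T}$. Rate matrix $\mathbf{Q}^{0}$: $q^{0}_{\mathcal{T},\mathcal{T}\cup\{k\}}=\lambda p_I(k,\mathcal{T})$ ($k\notin\mathcal{T}$), $q^{0}_{\mathcal{T},\mathcal{T}\setminus\{k\}}=\gamma$ ($k\in\mathcal{T}$), other off-diagonals $0$, rows summing to $0$. $\mathbf{Q}^{1}(p_R,p_J)$ equals $\mathbf{Q}^{0}$ except $q^{1}_{\mathcal{T},\mathcal{T}\cup\{1\}}=\lambda(p_R p_I(1,\mathcal{T})+p_J(1-p_I(1,\mathcal{T})))$ for $1\notin\mathcal{T}$ (rows summing to $0$). $\mathbf{P}^{b}=\mathbf{I}+\mathbf{Q}^{b}/u$ with entries $p^{b}_{i,j}$. The objective is $I(p_R,p_J)=\sum_{i,j}\pi^{0}_i p^{0}_{i,j}\ln(p^{0}_{i,j}/p^{1}_{i,j}(p_R,p_J))$ with $0\ln(0/q)=0$, $p\ln(p/0)=+\infty$ for $p>0$. *)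

theory Defs
  imports "HOL-Analysis.Analysis"
begin

text \<open>States: subsets of the station set {1..m}; vectors are functions on states,
  matrices are functions of two states; everything is restricted to the finite
  state space explicitly.\<close>

definition states :: "nat \<Rightarrow> nat set set" where
  "states m = Pow {1..m}"

definition q0_off :: "nat \<Rightarrow> real \<Rightarrow> real \<Rightarrow> (nat \<Rightarrow> nat set \<Rightarrow> real)
    \<Rightarrow> nat set \<Rightarrow> nat set \<Rightarrow> real" where
  "q0_off m lam gam pI T T' =
     (if \<exists>k\<in>{1..m}. k \<notin> T \<and> T' = insert k T then lam * pI (the_elem (T' - T)) T
      else if \<exists>k\<in>T. T' = T - {k} then gam
      else 0)"

definition q1_off :: "nat \<Rightarrow> real \<Rightarrow> real \<Rightarrow> (nat \<Rightarrow> nat set \<Rightarrow> real)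
    \<Rightarrow> real \<times> real \<Rightarrow> nat set \<Rightarrow> nat set \<Rightarrow> real" where
  "q1_off m lam gam pI p T T' =
     (if 1 \<notin> T \<and> T' = insert 1 T
      then lam * (fst p * pI 1 T + snd p * (1 - pI 1 T))
      else q0_off m lam gam pI T T')"

definition rate_matrix :: "nat set set \<Rightarrow> (nat set \<Rightarrow> nat set \<Rightarrow> real)
    \<Rightarrow> nat set \<Rightarrow> nat set \<Rightarrow> real" where
  "rate_matrix S off T T' =
     (if T = T' then - (\<Sum>T''\<in>S - {T}. off T T'') else off T T')"

definition unif :: "real \<Rightarrow> (nat set \<Rightarrow> nat set \<Rightarrow> real) \<Rightarrow> nat set \<Rightarrow> nat set \<Rightarrow> real" where
  "unif u Q T T' = (if T = T' then 1 else 0) + Q T T' / u"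

definition P0 :: "nat \<Rightarrow> real \<Rightarrow> real \<Rightarrow> (nat \<Rightarrow> nat set \<Rightarrow> real) \<Rightarrow> real
    \<Rightarrow> nat set \<Rightarrow> nat set \<Rightarrow> real" where
  "P0 m lam gam pI u = unif u (rate_matrix (states m) (q0_off m lam gam pI))"

definition P1 :: "nat \<Rightarrow> real \<Rightarrow> real \<Rightarrow> (nat \<Rightarrow> nat set \<Rightarrow> real) \<Rightarrow> real
    \<Rightarrow> real \<times> real \<Rightarrow> nat set \<Rightarrow> nat set \<Rightarrow> real" where
  "P1 m lam gam pI u p = unif u (rate_matrix (states m) (q1_off m lam gam pI p))"

fun mpow :: "nat set set \<Rightarrow> (nat set \<Rightarrow> nat set \<Rightarrow> real) \<Rightarrow> nat
    \<Rightarrow> nat set \<Rightarrow> nat set \<Rightarrow> real" where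
  "mpow S P 0 = (\<lambda>i j. if i = j then 1 else 0)"
| "mpow S P (Suc n) = (\<lambda>i j. \<Sum>k\<in>S. mpow S P n i k * P k j)"

definition irreducible_chain :: "nat set set \<Rightarrow> (nat set \<Rightarrow> nat set \<Rightarrow> real) \<Rightarrow> bool" where
  "irreducible_chain S P \<longleftrightarrow> (\<forall>i\<in>S. \<forall>j\<in>S. \<exists>n. mpow S P n i j > 0)"

definition is_stationary :: "nat set set \<Rightarrow> (nat set \<Rightarrow> nat set \<Rightarrow> real)
    \<Rightarrow> (nat set \<Rightarrow> real) \<Rightarrow> bool" where
  "is_stationary S P \<pi> \<longleftrightarrow>
     (\<forall>i\<in>S. \<pi> i \<ge> 0) \<and> (\<Sum>i\<in>S. \<pi> i) = 1 \<and>
     (\<forall>j\<in>S. (\<Sum>i\<in>S. \<pi> i * P i j) = \<pi> j) \<and> (\<forall>i. i \<notin> S \<longrightarrow> \<pi> i = 0)"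

text \<open>The (unique, for irreducible chains) stationary distribution.\<close>
definition stat_dist :: "nat set set \<Rightarrow> (nat set \<Rightarrow> nat set \<Rightarrow> real) \<Rightarrow> nat set \<Rightarrow> real" where
  "stat_dist S P = (THE \<pi>. is_stationary S P \<pi>)"

text \<open>First-order (Taylor) approximation of p |-> pi^1(p) around (pRh,pJh):
  pi^1(ph) + (p - ph) J(ph), the Jacobian rows being the partial derivatives
  with respect to pR and pJ.\<close>
definition pi1_ts :: "nat \<Rightarrow> real \<Rightarrow> real \<Rightarrow> (nat \<Rightarrow> nat set \<Rightarrow> real) \<Rightarrow> real
    \<Rightarrow> real \<times> real \<Rightarrow> real \<times> real \<Rightarrow> nat set \<Rightarrow> real" where
  "pi1_ts m lam gam pI u ph p T =
     (let \<pi>1 = (\<lambda>q. stat_dist (states m) (P1 m lam gam pI u q)) in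
      \<pi>1 ph T
      + (fst p - fst ph) * deriv (\<lambda>x. \<pi>1 (x, snd ph) T) (fst ph)
      + (snd p - snd ph) * deriv (\<lambda>y. \<pi>1 (fst ph, y) T) (snd ph))"

definition kl_term :: "real \<Rightarrow> real \<Rightarrow> ereal" where
  "kl_term a b = (if a = 0 then 0 else if b = 0 then \<infinity> else ereal (a * ln (a / b)))"

definition objI :: "nat \<Rightarrow> real \<Rightarrow> real \<Rightarrow> (nat \<Rightarrow> nat set \<Rightarrow> real) \<Rightarrow> real
    \<Rightarrow> (nat set \<Rightarrow> real) \<Rightarrow> real \<times> real \<Rightarrow> ereal" where
  "objI m lam gam pI u \<pi>0 p =
     (\<Sum>i\<in>states m. \<Sum>j\<in>states m.
        ereal (\<pi>0 i) * kl_term (P0 m lam gam pI u i j) (P1 m lam gam pI u p i j))"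

definition collision_states :: "nat \<Rightarrow> nat set set" where
  "collision_states m = {T \<in> states m. 1 \<in> T \<and> card T > 1}"

definition ereal_convex_on :: "(real \<times> real) set \<Rightarrow> (real \<times> real \<Rightarrow> ereal) \<Rightarrow> bool" where
  "ereal_convex_on D f \<longleftrightarrow> convex D \<and>
     (\<forall>x\<in>D. \<forall>y\<in>D. \<forall>t::real. 0 \<le> t \<and> t \<le> 1 \<longrightarrow>
        f ((1 - t) *\<^sub>R x + t *\<^sub>R y) \<le> ereal (1 - t) * f x + ereal t * f y)"

end

theory Submission
  imports Defs
begin

text \<open>Since \<open>pi1_ts\<close> is a first-order Taylor polynomial, the constraint is
  affine in \<open>p\<close> and the feasible set is the unit square cut by a half-plane. Every
  entry of \<open>P1 p\<close> is affine in \<open>p\<close>, and for fixed \<open>a \<ge> 0\<close> the map \<open>b \<mapsto> a ln (a / b)\<close>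
  (with the conventions at \<open>0\<close>) is convex on \<open>b \<ge> 0\<close> by concavity of \<open>ln\<close>; hence the
  objective is a nonnegative combination of convex functions, provided the entries of
  \<open>P1 p\<close> stay nonnegative on the square. That is where \<open>u \<ge> m max \<lambda> \<gamma>\<close> enters: each
  state has at most \<open>m\<close> neighbours, each reached with rate at most \<open>max \<lambda> \<gamma>\<close>.
  Irreducibility and the expansion point only make \<open>\<pi>\<^sup>1\<close> and its Jacobian meaningful;
  convexity does not depend on them.\<close>

lemma convex_combination_pos:
  fixes b0 b1 t :: real
  assumes "0 < b0" "0 < b1" "0 \<le> t" "t \<le> 1"
  shows "0 < (1 - t) * b0 + t * b1"
  using assms by (cases "t = 0") (auto intro: add_nonneg_pos)

lemma mult_ln_div_convex_right:
  fixes a b0 b1 t :: real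
  assumes "0 \<le> a" "0 < b0" "0 < b1" "0 \<le> t" "t \<le> 1"
  shows "a * ln (a / ((1 - t) * b0 + t * b1)) \<le> (1 - t) * (a * ln (a / b0)) + t * (a * ln (a / b1))"
proof (cases "a = 0")
  case False
  have "(1 - t) * ln b0 + t * ln b1 \<le> ln ((1 - t) * b0 + t * b1)"
    using ln_concave assms by (simp add: concave_on_iff)
  then have "a * ((1 - t) * ln b0 + t * ln b1) \<le> a * ln ((1 - t) * b0 + t * b1)"
    using assms(1) by (rule mult_left_mono)
  then show ?thesis
    using False assms convex_combination_pos[OF assms(2-5)] by (simp add: ln_div algebra_simps)
qed simp

lemma kl_term_convex_right:
  fixes a b0 b1 t :: real
  assumes "0 \<le> a" "0 \<le> b0" "0 \<le> b1" "0 \<le> t" "t \<le> 1"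
  shows "kl_term a ((1 - t) * b0 + t * b1) \<le> ereal (1 - t) * kl_term a b0 + ereal t * kl_term a b1"
proof -
  consider "a = 0 \<or> t = 0 \<or> t = 1" | "0 < a" "0 < t" "t < 1" "b0 = 0 \<or> b1 = 0"
    | "0 < b0" "0 < b1"
    using assms by linarith
  then show ?thesis
  proof cases
    case 1
    then show ?thesis by (auto simp: kl_term_def)
  next
    case 2
    then have rhs: "ereal (1 - t) * kl_term a b0 + ereal t * kl_term a b1 = \<infinity>"
      by (auto simp: kl_term_def)
    show ?thesis by (simp only: rhs ereal_less_eq(1))
  next
    case 3
    then show ?thesis
      using mult_ln_div_convex_right[OF assms(1) 3 assms(4,5)]
        convex_combination_pos[OF 3 assms(4,5)]
      by (auto simp: kl_term_def)
  qed
qed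

lemma sum_le_card_mult_bound:
  fixes f :: "'a \<Rightarrow> real"
  assumes "finite S" "finite N" "0 \<le> M"
    and "\<And>x. x \<in> S \<Longrightarrow> 0 \<le> f x \<and> f x \<le> M"
    and "\<And>x. x \<in> S - N \<Longrightarrow> f x = 0"
  shows "sum f S \<le> M * real (card N)"
proof -
  have "sum f S = sum f (S \<inter> N)"
    using assms(1,5) by (intro sum.mono_neutral_right) auto
  also have "\<dots> \<le> real (card (S \<inter> N)) * M"
    using assms(4) sum_bounded_above[of "S \<inter> N" f M] by auto
  also have "\<dots> \<le> real (card N) * M"
    using assms(2,3) by (intro mult_right_mono) (auto intro: card_mono)
  finally show ?thesis by (simp add: mult.commute)
qed

definition neighbours :: "nat \<Rightarrow> nat set \<Rightarrow> nat set set" where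
  "neighbours m T = (\<lambda>k. if k \<in> T then T - {k} else insert k T) ` {1..m}"

lemma finite_neighbours [simp]: "finite (neighbours m T)"
  by (simp add: neighbours_def)

lemma card_neighbours_le: "card (neighbours m T) \<le> m"
  unfolding neighbours_def by (rule order_trans[OF card_image_le]) simp_all

lemma q0_off_eq_0:
  assumes "T \<subseteq> {1..m}" "T' \<notin> neighbours m T"
  shows "q0_off m lam gam pI T T' = 0"
proof -
  have "T' \<noteq> insert k T" if "k \<in> {1..m}" "k \<notin> T" for k
    using assms(2) that unfolding neighbours_def by force
  moreover have "T' \<noteq> T - {k}" if "k \<in> T" for k
    using assms that unfolding neighbours_def by force
  ultimately have no_up: "\<not> (\<exists>k\<in>{1..m}. k \<notin> T \<and> T' = insert k T)"
    and no_down: "\<not> (\<exists>k\<in>T. T' = T - {k})"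
    by blast+
  show ?thesis by (simp only: q0_off_def if_not_P[OF no_up] if_not_P[OF no_down])
qed

lemma q0_off_bounds:
  assumes pI_range: "\<And>k. k \<in> {1..m} \<Longrightarrow> k \<notin> T \<Longrightarrow> 0 \<le> pI k T \<and> pI k T \<le> 1"
    and "0 \<le> lam" "0 \<le> gam"
  shows "0 \<le> q0_off m lam gam pI T T' \<and> q0_off m lam gam pI T T' \<le> max lam gam"
proof (cases "\<exists>k\<in>{1..m}. k \<notin> T \<and> T' = insert k T")
  case True
  then obtain k where k: "k \<in> {1..m}" "k \<notin> T" "T' = insert k T" by blast
  then have "T' - T = {k}" by auto
  then have "q0_off m lam gam pI T T' = lam * pI k T"
    using True by (simp add: q0_off_def)
  moreover have "lam * pI k T \<le> lam"
    using pI_range[OF k(1,2)] assms(2) by (simp add: mult_left_le)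
  ultimately show ?thesis
    using pI_range[OF k(1,2)] assms(2) by auto
qed (use assms in \<open>auto simp: q0_off_def\<close>)

lemma q1_off_eq_q0_off:
  assumes "\<not> (1 \<notin> T \<and> T' = insert 1 T)"
  shows "q1_off m lam gam pI p T T' = q0_off m lam gam pI T T'"
  by (simp only: q1_off_def if_not_P[OF assms])

lemma q1_off_eq_0:
  assumes "1 \<le> m" "T \<subseteq> {1..m}" "T' \<notin> neighbours m T"
  shows "q1_off m lam gam pI p T T' = 0"
proof -
  have "1 \<notin> T \<Longrightarrow> insert 1 T \<in> neighbours m T"
    using assms(1) unfolding neighbours_def by (intro image_eqI[of _ _ 1]) auto
  then show ?thesis
    using assms q0_off_eq_0 q1_off_eq_q0_off by metis
qed

lemma q1_off_bounds:
  assumes pI_range: "\<And>k. k \<in> {1..m} \<Longrightarrow> k \<notin> T \<Longrightarrow> 0 \<le> pI k T \<and> pI k T \<le> 1"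
    and "0 \<le> lam" "0 \<le> gam" "1 \<le> m" "p \<in> {0..1} \<times> {0..1}"
  shows "0 \<le> q1_off m lam gam pI p T T' \<and> q1_off m lam gam pI p T T' \<le> max lam gam"
proof (cases "1 \<notin> T \<and> T' = insert 1 T")
  case True
  let ?w = "pI 1 T"
  have w: "0 \<le> ?w" "?w \<le> 1" using pI_range[of 1] True assms(4) by auto
  have "0 \<le> fst p * ?w + snd p * (1 - ?w)"
    using assms(5) w by auto
  moreover have "fst p * ?w + snd p * (1 - ?w) \<le> 1"
    using convex_bound_le[of "fst p" 1 "snd p" ?w "1 - ?w"] assms(5) w
    by (auto simp: mult.commute)
  ultimately have "0 \<le> lam * (fst p * ?w + snd p * (1 - ?w)) \<and> lam * (fst p * ?w + snd p * (1 - ?w)) \<le> lam"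
    using assms(2) by (simp add: mult_left_le)
  then show ?thesis using True by (auto simp: q1_off_def)
next
  case False
  then show ?thesis
    using q0_off_bounds[of m T pI lam gam, OF pI_range assms(2,3)] q1_off_eq_q0_off by metis
qed

lemma P1_nonneg:
  assumes pI_range: "\<And>k T. T \<subseteq> {1..m} \<Longrightarrow> k \<in> {1..m} \<Longrightarrow> k \<notin> T \<Longrightarrow> 0 \<le> pI k T \<and> pI k T \<le> 1"
    and "0 \<le> lam" "0 \<le> gam" "1 \<le> m" "0 < u" "real m * max lam gam \<le> u"
    and "p \<in> {0..1} \<times> {0..1}" "T \<in> states m"
  shows "0 \<le> P1 m lam gam pI u p T T'"
proof -
  have T_sub: "T \<subseteq> {1..m}" using assms(8) by (simp add: states_def)
  note bounds = q1_off_bounds[of m T pI lam gam, OF pI_range[OF T_sub] assms(2-4,7)]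
  show ?thesis
  proof (cases "T = T'")
    case True
    have "(\<Sum>T''\<in>states m - {T}. q1_off m lam gam pI p T T'') \<le> max lam gam * real (card (neighbours m T))"
      using bounds q1_off_eq_0[OF assms(4) T_sub] assms(2)
      by (intro sum_le_card_mult_bound) (auto simp: states_def)
    also have "\<dots> \<le> u"
      using card_neighbours_le[of m T] assms(2,6)
      by (smt (verit) max.cobounded1 mult.commute mult_left_mono of_nat_le_iff)
    finally show ?thesis
      using True assms(5) by (simp add: P1_def unif_def rate_matrix_def)
  next
    case False
    then show ?thesis
      using bounds assms(5) by (simp add: P1_def unif_def rate_matrix_def)
  qed
qed

lemma q1_off_convex_combination:
  "q1_off m lam gam pI ((1 - t) *\<^sub>R x + t *\<^sub>R y) T T' =
   (1 - t) * q1_off m lam gam pI x T T' + t * q1_off m lam gam pI y T T'"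
  by (simp add: q1_off_def algebra_simps)

lemma P1_convex_combination:
  "P1 m lam gam pI u ((1 - t) *\<^sub>R x + t *\<^sub>R y) T T' =
   (1 - t) * P1 m lam gam pI u x T T' + t * P1 m lam gam pI u y T T'"
proof -
  have sum_comb: "(\<Sum>i\<in>A. (1 - t) * f i + t * g i) = (1 - t) * sum f A + t * sum g A"
    for A and f g :: "nat set \<Rightarrow> real"
    by (simp add: sum.distrib sum_distrib_left)
  show ?thesis
    by (simp only: P1_def unif_def rate_matrix_def q1_off_convex_combination sum_comb)
      (cases "u = 0"; simp add: field_simps)
qed

lemma P0_eq_P1_one_zero:
  assumes "1 \<le> m"
  shows "P0 m lam gam pI u = P1 m lam gam pI u (1, 0)"
proof -
  have "q0_off m lam gam pI T T' = q1_off m lam gam pI (1, 0) T T'" for T T'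
  proof (cases "1 \<notin> T \<and> T' = insert 1 T")
    case True
    then have "insert 1 T - T = {1}" "\<exists>k\<in>{1..m}. k \<notin> T \<and> T' = insert k T"
      using assms by auto
    then show ?thesis using True by (simp add: q0_off_def q1_off_def)
  qed (simp add: q1_off_eq_q0_off)
  then have "q0_off m lam gam pI = q1_off m lam gam pI (1, 0)" by (intro ext)
  then show ?thesis by (simp add: P0_def P1_def)
qed

lemma ereal_mult_left_convex_bound:
  fixes X Y Z :: ereal and c s t :: real
  assumes "0 \<le> c" "0 \<le> s" "0 \<le> t" "Y \<noteq> -\<infinity>" "Z \<noteq> -\<infinity>"
    and "X \<le> ereal s * Y + ereal t * Z"
  shows "ereal c * X \<le> ereal s * (ereal c * Y) + ereal t * (ereal c * Z)"
proof -
  have "ereal c * X \<le> ereal c * (ereal s * Y + ereal t * Z)"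
    using assms(1,6) by (intro ereal_mult_left_mono) auto
  also have "\<dots> = ereal s * (ereal c * Y) + ereal t * (ereal c * Z)"
    using assms(1-5) by (cases Y; cases Z) (auto simp: algebra_simps)
  finally show ?thesis .
qed

lemma sum_ereal_convex_bound:
  fixes f :: "'a \<Rightarrow> 'b \<Rightarrow> ereal"
  assumes "0 \<le> t" "t \<le> 1"
    and "\<And>i. i \<in> A \<Longrightarrow> f i z \<le> ereal (1 - t) * f i x + ereal t * f i y"
  shows "(\<Sum>i\<in>A. f i z) \<le> ereal (1 - t) * (\<Sum>i\<in>A. f i x) + ereal t * (\<Sum>i\<in>A. f i y)"
proof -
  have "(\<Sum>i\<in>A. f i z) \<le> (\<Sum>i\<in>A. ereal (1 - t) * f i x + ereal t * f i y)"
    using assms(3) by (rule sum_mono)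
  also have "\<dots> = (\<Sum>i\<in>A. f i x) * ereal (1 - t) + (\<Sum>i\<in>A. f i y) * ereal t"
    using sum_distrib_right_ereal[of "1 - t" "\<lambda>i. f i x" A] sum_distrib_right_ereal[of t "\<lambda>i. f i y" A]
      assms(1,2)
    by (simp add: sum.distrib mult.commute)
  finally show ?thesis by (simp add: mult.commute)
qed

lemma objI_ereal_convex_on:
  assumes "\<And>i. i \<in> states m \<Longrightarrow> 0 \<le> \<pi>0 i"
    and "\<And>i j. i \<in> states m \<Longrightarrow> 0 \<le> P0 m lam gam pI u i j"
    and "\<And>p i j. p \<in> {0..1} \<times> {0..1} \<Longrightarrow> i \<in> states m \<Longrightarrow> 0 \<le> P1 m lam gam pI u p i j"
  shows "ereal_convex_on ({0..1} \<times> {0..1}) (objI m lam gam pI u \<pi>0)"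
  unfolding ereal_convex_on_def
proof (intro conjI ballI allI impI)
  show "convex ({0..1::real} \<times> {0..1::real})"
    by (intro convex_Times convex_real_interval)
next
  fix x y :: "real \<times> real" and t :: real
  assume x: "x \<in> {0..1} \<times> {0..1}" and y: "y \<in> {0..1} \<times> {0..1}" and t: "0 \<le> t \<and> t \<le> 1"
  have "ereal (\<pi>0 i) * kl_term (P0 m lam gam pI u i j) (P1 m lam gam pI u ((1 - t) *\<^sub>R x + t *\<^sub>R y) i j)
      \<le> ereal (1 - t) * (ereal (\<pi>0 i) * kl_term (P0 m lam gam pI u i j) (P1 m lam gam pI u x i j))
        + ereal t * (ereal (\<pi>0 i) * kl_term (P0 m lam gam pI u i j) (P1 m lam gam pI u y i j))"
    if "i \<in> states m" for i j
    unfolding P1_convex_combination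
    using t assms that x y
    by (intro ereal_mult_left_convex_bound kl_term_convex_right) (auto simp: kl_term_def)
  then show "objI m lam gam pI u \<pi>0 ((1 - t) *\<^sub>R x + t *\<^sub>R y)
      \<le> ereal (1 - t) * objI m lam gam pI u \<pi>0 x + ereal t * objI m lam gam pI u \<pi>0 y"
    unfolding objI_def using t by (intro sum_ereal_convex_bound) auto
qed

lemma sum_pi1_ts_affine:
  "\<exists>c a. \<forall>p. (\<Sum>T\<in>A. pi1_ts m lam gam pI u ph p T) = c + a \<bullet> p"
proof -
  define \<pi>1 where "\<pi>1 = (\<lambda>q. stat_dist (states m) (P1 m lam gam pI u q))"
  define dR where "dR T = deriv (\<lambda>x. \<pi>1 (x, snd ph) T) (fst ph)" for T
  define dJ where "dJ T = deriv (\<lambda>y. \<pi>1 (fst ph, y) T) (snd ph)" for T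
  have "(\<Sum>T\<in>A. pi1_ts m lam gam pI u ph p T)
      = (\<Sum>T\<in>A. \<pi>1 ph T - fst ph * dR T - snd ph * dJ T) + (sum dR A, sum dJ A) \<bullet> p" for p
    by (simp add: pi1_ts_def \<pi>1_def dR_def dJ_def inner_prod_def sum.distrib sum_subtractf
        sum_distrib_left sum_distrib_right algebra_simps)
  then show ?thesis by blast
qed

theorem theorem1:
  fixes m :: nat and lam gam u tau :: real
    and pI :: "nat \<Rightarrow> nat set \<Rightarrow> real"
    and \<pi>0 :: "nat set \<Rightarrow> real"
    and pRh pJh :: real
  assumes m_pos: "m \<ge> 1"
    and lam_pos: "lam > 0" and gam_pos: "gam > 0"
    and pI_range: "\<And>k T. T \<subseteq> {1..m} \<Longrightarrow> k \<in> {1..m} \<Longrightarrow> k \<notin> T \<Longrightarrow> 0 \<le> pI k T \<and> pI k T \<le> 1"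
    and u_ge: "u \<ge> real m * max lam gam"
    and P0_irr: "irreducible_chain (states m) (P0 m lam gam pI u)"
    and pi0_stat: "is_stationary (states m) (P0 m lam gam pI u) \<pi>0"
    and hat_range: "0 < pRh" "pRh \<le> 1" "0 < pJh" "pJh \<le> 1"
    and P1_irr: "irreducible_chain (states m) (P1 m lam gam pI u (pRh, pJh))"
  defines "F \<equiv> {p \<in> {0..1} \<times> {0..1}.
              (\<Sum>T\<in>collision_states m. pi1_ts m lam gam pI u (pRh, pJh) p T)
                \<ge> tau * (\<Sum>T\<in>collision_states m. \<pi>0 T)}"
  shows "convex F \<and> ereal_convex_on ({0..1} \<times> {0..1}) (objI m lam gam pI u \<pi>0)"
proof
  obtain c a where affine:
      "\<And>p. (\<Sum>T\<in>collision_states m. pi1_ts m lam gam pI u (pRh, pJh) p T) = c + a \<bullet> p"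
    using sum_pi1_ts_affine by metis
  have "F = ({0..1} \<times> {0..1}) \<inter> {p. a \<bullet> p \<ge> tau * (\<Sum>T\<in>collision_states m. \<pi>0 T) - c}"
    unfolding F_def affine by auto
  then show "convex F"
    by (simp add: convex_Int convex_Times convex_halfspace_ge)
next
  have "0 < real m * max lam gam"
    using m_pos lam_pos by (simp add: max.strict_coboundedI1)
  with u_ge have u_pos: "0 < u" by linarith
  note P1_nonneg' = P1_nonneg[OF pI_range less_imp_le[OF lam_pos] less_imp_le[OF gam_pos] m_pos u_pos u_ge]
  show "ereal_convex_on ({0..1} \<times> {0..1}) (objI m lam gam pI u \<pi>0)"
  proof (rule objI_ereal_convex_on)
    show "0 \<le> \<pi>0 i" if "i \<in> states m" for i
      using pi0_stat that by (simp add: is_stationary_def)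
  qed (use P1_nonneg' in \<open>auto simp: P0_eq_P1_one_zero[OF m_pos]\<close>)
qed

end
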